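(* Consider a GND instance and a reply $\varrho$-oracle ($\varrho\ge1$) for its requests. Let $p^0=(p^0_1,\dots,p^0_N)$ where, for each $i\in[N]$, $p^0_i\in P_i$ is the output of the oracle on $P_i$ with the toll function $\tau_i^0(e)=F_e(w_i(e))$, $e\in E$. Then $C(p^0) \le \varrho \cdot N^{\max_j \alpha_j} \cdot C^*$.
   Context: GND instance: finite resource set $E$; requests $i \in [N]$, each with a reply collection $P_i \subseteq 2^E$ and a weight vector $w_i \in \mathbb{Z}_{\geq 1}^E$; constants $q \in \mathbb{Z}_{\ge1}$, $\alpha_1,\dots,\alpha_q > 1$; for each $e$, $\sigma_e \geq 0$ and $\xi_{e,j} \geq 0$ (at least one $\xi_{e,j}>0$), and cost function $F_e(0)=0$, $F_e(l)=\sigma_e+\sum_j \xi_{e,j} l^{\alpha_j}$ for $l>0$. A feasible solution is $p=(p_1,\dots,p_N)$ with $p_i\in P_i$; load $l_e^p=\sum_{i:e\in p_i} w_i(e)$; total cost $C(p)=\sum_e F_e(l_e^p)$; $C^*$ is the minimum total cost. A reply $\varrho$-oracle, given a reply collection $R$ and tolls $\tau:E\to\mathbb{R}_{>0}$, returns $r\in R$ with $\sum_{e\in r}\tau(e)\le\varrho\sum_{e\in r'}\tau(e)$ for every $r'\in R$. *)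

theory Defs
  imports Complex_Main
begin

definition cost_fn :: "nat \<Rightarrow> (nat \<Rightarrow> real) \<Rightarrow> ('e \<Rightarrow> real) \<Rightarrow> ('e \<Rightarrow> nat \<Rightarrow> real)
    \<Rightarrow> 'e \<Rightarrow> real \<Rightarrow> real" where
  "cost_fn q alpha sigma xi e l =
     (if l = 0 then 0 else sigma e + (\<Sum>j<q. xi e j * l powr alpha j))"

definition load :: "nat \<Rightarrow> (nat \<Rightarrow> 'e \<Rightarrow> nat) \<Rightarrow> (nat \<Rightarrow> 'e set) \<Rightarrow> 'e \<Rightarrow> nat" where
  "load N w p e = (\<Sum>i\<in>{i. i < N \<and> e \<in> p i}. w i e)"

definition total_cost :: "'e set \<Rightarrow> nat \<Rightarrow> (nat \<Rightarrow> 'e \<Rightarrow> nat) \<Rightarrow> nat \<Rightarrow> (nat \<Rightarrow> real)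
    \<Rightarrow> ('e \<Rightarrow> real) \<Rightarrow> ('e \<Rightarrow> nat \<Rightarrow> real) \<Rightarrow> (nat \<Rightarrow> 'e set) \<Rightarrow> real" where
  "total_cost E N w q alpha sigma xi p =
     (\<Sum>e\<in>E. cost_fn q alpha sigma xi e (real (load N w p e)))"

definition feasible :: "nat \<Rightarrow> (nat \<Rightarrow> 'e set set) \<Rightarrow> (nat \<Rightarrow> 'e set) \<Rightarrow> bool" where
  "feasible N P p \<longleftrightarrow> (\<forall>i<N. p i \<in> P i)"

text \<open>Optimal cost C*: minimum total cost over feasible solutions (the set of
  attained values is finite since E is finite).\<close>
definition opt_cost :: "'e set \<Rightarrow> nat \<Rightarrow> (nat \<Rightarrow> 'e set set) \<Rightarrow> (nat \<Rightarrow> 'e \<Rightarrow> nat) \<Rightarrow> nat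
    \<Rightarrow> (nat \<Rightarrow> real) \<Rightarrow> ('e \<Rightarrow> real) \<Rightarrow> ('e \<Rightarrow> nat \<Rightarrow> real) \<Rightarrow> real" where
  "opt_cost E N P w q alpha sigma xi =
     Min {total_cost E N w q alpha sigma xi p | p. feasible N P p}"

definition reply_oracle :: "'e set \<Rightarrow> real \<Rightarrow> ('e set set \<Rightarrow> ('e \<Rightarrow> real) \<Rightarrow> 'e set) \<Rightarrow> bool" where
  "reply_oracle E rho orc \<longleftrightarrow>
     (\<forall>R \<tau>. R \<subseteq> Pow E \<and> R \<noteq> {} \<and> (\<forall>e\<in>E. \<tau> e > 0) \<longrightarrow>
        orc R \<tau> \<in> R \<and> (\<forall>r'\<in>R. (\<Sum>e\<in>orc R \<tau>. \<tau> e) \<le> rho * (\<Sum>e\<in>r'. \<tau> e)))"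

end

theory Submission imports Defs "HOL-Analysis.Convex" begin

(* Give request i the toll tau_i(e) = F_e(w_i(e)), the cost it would cause on e if alone.
   For a resource shared by at most N requests, convexity of l |-> l^a (the power-mean
   inequality) gives F_e(sum w_i) <= N^(A-1) sum F_e(w_i) for A = max_j alpha_j, while
   superadditivity of l^a, together with counting the fixed cost sigma_e at most N times, gives
   sum F_e(w_i) <= N F_e(sum w_i). Summing over resources and exchanging the sums yields
   C(p0) <= N^(A-1) sum_i tau_i(p0_i) and sum_i tau_i(p_opt_i) <= N C(p_opt) for an optimum p_opt; the
   approximation guarantee tau_i(p0_i) <= rho tau_i(p_opt_i) of the replies connects the two. *)

lemma powr_sum_le_card_powr_sum_powr:
  fixes a :: "'i \<Rightarrow> real"
  assumes "finite I" "I \<noteq> {}" "\<And>i. i \<in> I \<Longrightarrow> a i > 0" "r \<ge> 1"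
  shows "(\<Sum>i\<in>I. a i) powr r \<le> real (card I) powr (r - 1) * (\<Sum>i\<in>I. a i powr r)"
proof -
  define k where "k = real (card I)"
  have k: "k > 0" using assms by (simp add: k_def card_gt_0_iff)
  have "(\<Sum>i\<in>I. (1/k) *\<^sub>R a i) powr r \<le> (\<Sum>i\<in>I. (1/k) * a i powr r)"
    by (rule convex_on_sum[OF assms(1,2) powr_convex[OF assms(4)]])
       (use assms k in \<open>auto simp: k_def\<close>)
  hence "((\<Sum>i\<in>I. a i) / k) powr r \<le> (\<Sum>i\<in>I. a i powr r) / k"
    by (simp add: sum_distrib_left[symmetric] divide_inverse mult.commute)
  moreover have "((\<Sum>i\<in>I. a i) / k) powr r = (\<Sum>i\<in>I. a i) powr r / k powr r"
    using assms k by (auto intro!: powr_divide sum_nonneg less_imp_le)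
  ultimately have "(\<Sum>i\<in>I. a i) powr r \<le> k powr r * ((\<Sum>i\<in>I. a i powr r) / k)"
    using k by (simp add: divide_le_eq mult.commute)
  also have "\<dots> = k powr (r - 1) * (\<Sum>i\<in>I. a i powr r)"
    using k by (simp add: powr_diff)
  finally show ?thesis by (simp add: k_def)
qed

lemma sum_powr_le_powr_sum:
  fixes a :: "'i \<Rightarrow> real"
  assumes "finite I" "\<And>i. i \<in> I \<Longrightarrow> a i \<ge> 0" "r \<ge> 1"
  shows "(\<Sum>i\<in>I. a i powr r) \<le> (\<Sum>i\<in>I. a i) powr r"
proof -
  define S where "S = (\<Sum>i\<in>I. a i)"
  have "S \<ge> 0" unfolding S_def using assms by (intro sum_nonneg) auto
  have "a i powr r \<le> a i * S powr (r - 1)" if "i \<in> I" for i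
  proof (cases "a i = 0")
    case True thus ?thesis using assms by simp
  next
    case False
    hence "a i > 0" using assms that by force
    have "a i \<le> S" unfolding S_def using assms that by (intro member_le_sum) auto
    have "a i powr r = a i * a i powr (r - 1)" using \<open>a i > 0\<close> by (simp add: powr_diff)
    also have "\<dots> \<le> a i * S powr (r - 1)"
      using \<open>a i > 0\<close> \<open>a i \<le> S\<close> assms by (intro mult_left_mono powr_mono2) auto
    finally show ?thesis .
  qed
  hence "(\<Sum>i\<in>I. a i powr r) \<le> (\<Sum>i\<in>I. a i * S powr (r - 1))" by (rule sum_mono)
  also have "\<dots> = S * S powr (r - 1)" by (simp add: S_def sum_distrib_right)
  also have "\<dots> = S powr r"
    using \<open>S \<ge> 0\<close> by (cases "S = 0") (use assms in \<open>auto simp: powr_diff\<close>)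
  finally show ?thesis by (simp add: S_def)
qed

lemma cost_fn_sum_of_pos:
  fixes a :: "'i \<Rightarrow> real"
  assumes "finite I" "I \<noteq> {}" "\<And>i. i \<in> I \<Longrightarrow> a i > 0"
  shows "cost_fn q alpha sigma xi e (\<Sum>i\<in>I. a i)
           = sigma e + (\<Sum>j<q. xi e j * (\<Sum>i\<in>I. a i) powr alpha j)"
proof -
  have "0 < (\<Sum>i\<in>I. a i)" using assms by (rule sum_pos)
  thus ?thesis by (simp add: cost_fn_def)
qed

lemma sum_cost_fn_of_pos:
  fixes a :: "'i \<Rightarrow> real"
  assumes "\<And>i. i \<in> I \<Longrightarrow> a i > 0"
  shows "(\<Sum>i\<in>I. cost_fn q alpha sigma xi e (a i))
           = real (card I) * sigma e + (\<Sum>j<q. xi e j * (\<Sum>i\<in>I. a i powr alpha j))"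
proof -
  have "(\<Sum>i\<in>I. cost_fn q alpha sigma xi e (a i))
          = (\<Sum>i\<in>I. sigma e + (\<Sum>j<q. xi e j * a i powr alpha j))"
    using assms by (intro sum.cong) (auto simp: cost_fn_def less_imp_neq[symmetric])
  also have "\<dots> = real (card I) * sigma e + (\<Sum>j<q. xi e j * (\<Sum>i\<in>I. a i powr alpha j))"
    by (simp add: sum.distrib sum_distrib_left sum.swap[of _ I])
  finally show ?thesis .
qed

lemma cost_fn_sum_le:
  fixes a :: "'i \<Rightarrow> real"
  assumes I: "finite I" "card I \<le> N" and a: "\<And>i. i \<in> I \<Longrightarrow> a i > 0"
    and sigma: "sigma e \<ge> 0" and xi: "\<And>j. j < q \<Longrightarrow> xi e j \<ge> 0"
    and alpha: "\<And>j. j < q \<Longrightarrow> 1 \<le> alpha j" "\<And>j. j < q \<Longrightarrow> alpha j \<le> A" and "1 \<le> A"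
  shows "cost_fn q alpha sigma xi e (\<Sum>i\<in>I. a i)
           \<le> real N powr (A - 1) * (\<Sum>i\<in>I. cost_fn q alpha sigma xi e (a i))"
proof (cases "I = {}")
  case True thus ?thesis by (simp add: cost_fn_def)
next
  case False
  define k where "k = real (card I)"
  have k: "1 \<le> k" "k \<le> real N" using I False by (auto simp: k_def Suc_le_eq card_gt_0_iff)
  have "1 \<le> real N powr (A - 1)" using k \<open>1 \<le> A\<close> by (simp add: ge_one_powr_ge_zero)
  have fixed_cost: "sigma e \<le> real N powr (A - 1) * (k * sigma e)"
  proof -
    have "sigma e \<le> k * sigma e" using k sigma by (simp add: mult_le_cancel_right1)
    also have "\<dots> \<le> real N powr (A - 1) * (k * sigma e)"
      using mult_right_mono[OF \<open>1 \<le> real N powr (A - 1)\<close>, of "k * sigma e"] k sigma by simp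
    finally show ?thesis .
  qed
  have power_term: "(\<Sum>i\<in>I. a i) powr alpha j \<le> real N powr (A - 1) * (\<Sum>i\<in>I. a i powr alpha j)"
    if "j < q" for j
  proof -
    have "(\<Sum>i\<in>I. a i) powr alpha j \<le> k powr (alpha j - 1) * (\<Sum>i\<in>I. a i powr alpha j)"
      unfolding k_def using I False a alpha that
      by (intro powr_sum_le_card_powr_sum_powr) auto
    also have "\<dots> \<le> real N powr (A - 1) * (\<Sum>i\<in>I. a i powr alpha j)"
    proof (rule mult_right_mono)
      have "k powr (alpha j - 1) \<le> real N powr (alpha j - 1)"
        using k alpha that by (intro powr_mono2) auto
      also have "\<dots> \<le> real N powr (A - 1)"
        using k alpha that by (intro powr_mono) auto
      finally show "k powr (alpha j - 1) \<le> real N powr (A - 1)" .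
    qed (use a in \<open>auto intro: sum_nonneg less_imp_le\<close>)
    finally show ?thesis .
  qed
  have "(\<Sum>j<q. xi e j * (\<Sum>i\<in>I. a i) powr alpha j)
          \<le> (\<Sum>j<q. xi e j * (real N powr (A - 1) * (\<Sum>i\<in>I. a i powr alpha j)))"
    using xi power_term by (intro sum_mono mult_left_mono) auto
  also have "\<dots> = real N powr (A - 1) * (\<Sum>j<q. xi e j * (\<Sum>i\<in>I. a i powr alpha j))"
    by (simp add: sum_distrib_left mult.left_commute)
  finally show ?thesis
    using fixed_cost I(1) False a by (simp add: cost_fn_sum_of_pos sum_cost_fn_of_pos k_def distrib_left)
qed

lemma sum_cost_fn_le:
  fixes a :: "'i \<Rightarrow> real"
  assumes I: "finite I" "card I \<le> N" and a: "\<And>i. i \<in> I \<Longrightarrow> a i > 0"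
    and sigma: "sigma e \<ge> 0" and xi: "\<And>j. j < q \<Longrightarrow> xi e j \<ge> 0"
    and alpha: "\<And>j. j < q \<Longrightarrow> 1 \<le> alpha j"
  shows "(\<Sum>i\<in>I. cost_fn q alpha sigma xi e (a i))
           \<le> real N * cost_fn q alpha sigma xi e (\<Sum>i\<in>I. a i)"
proof (cases "I = {}")
  case True thus ?thesis by (simp add: cost_fn_def)
next
  case False
  have "0 < card I" using I False by (simp add: card_gt_0_iff)
  hence "1 \<le> real N" using I by linarith
  define T where "T = (\<Sum>j<q. xi e j * (\<Sum>i\<in>I. a i) powr alpha j)"
  have "0 \<le> T" unfolding T_def using xi by (intro sum_nonneg) auto
  have "(\<Sum>j<q. xi e j * (\<Sum>i\<in>I. a i powr alpha j)) \<le> T"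
    unfolding T_def using xi alpha I(1) a
    by (intro sum_mono mult_left_mono sum_powr_le_powr_sum) (auto intro: less_imp_le)
  moreover have "real (card I) * sigma e \<le> real N * sigma e"
    using I sigma by (intro mult_right_mono) auto
  moreover have "T \<le> real N * T"
    using \<open>1 \<le> real N\<close> \<open>0 \<le> T\<close> by (simp add: mult_le_cancel_right1)
  ultimately show ?thesis
    using I(1) False a by (simp add: cost_fn_sum_of_pos sum_cost_fn_of_pos T_def[symmetric] distrib_left)
qed

lemma cost_fn_pos:
  assumes "l > 0" "sigma e \<ge> 0" "\<And>j. j < q \<Longrightarrow> xi e j \<ge> 0" "\<exists>j<q. xi e j > 0"
  shows "cost_fn q alpha sigma xi e l > 0"
proof -
  obtain j where "j < q" "xi e j > 0" using assms(4) by blast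
  hence "0 < (\<Sum>j<q. xi e j * l powr alpha j)"
    using assms by (intro sum_pos2[of _ j]) auto
  thus ?thesis using assms(1,2) by (simp add: cost_fn_def)
qed

lemma sum_users_eq_sum_replies:
  fixes N :: nat
  assumes "finite E" "\<And>i. i < N \<Longrightarrow> p i \<subseteq> E"
  shows "(\<Sum>e\<in>E. \<Sum>i\<in>{i. i < N \<and> e \<in> p i}. f i e) = (\<Sum>i<N. \<Sum>e\<in>p i. f i e)"
proof -
  have "(\<Sum>i\<in>{..<N}. \<Sum>e\<in>{e\<in>E. e \<in> p i}. f i e) = (\<Sum>e\<in>E. \<Sum>i\<in>{i\<in>{..<N}. e \<in> p i}. f i e)"
    by (rule sum.swap_restrict) (simp_all add: assms(1))
  moreover have "{e\<in>E. e \<in> p i} = p i" if "i < N" for i using assms(2)[OF that] by auto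
  ultimately show ?thesis by simp
qed

lemma card_users_le: "card {i. i < N \<and> e \<in> p i} \<le> N"
  using card_mono[of "{..<N}" "{i. i < N \<and> e \<in> p i}"] by auto

lemma total_cost_le_isolated_costs:
  assumes "finite E" "\<And>i. i < N \<Longrightarrow> p i \<subseteq> E"
    and w: "\<And>i e. i < N \<Longrightarrow> e \<in> E \<Longrightarrow> w i e \<ge> 1"
    and "\<And>e. e \<in> E \<Longrightarrow> sigma e \<ge> 0" "\<And>e j. e \<in> E \<Longrightarrow> j < q \<Longrightarrow> xi e j \<ge> 0"
    and "\<And>j. j < q \<Longrightarrow> 1 \<le> alpha j" "\<And>j. j < q \<Longrightarrow> alpha j \<le> A" "1 \<le> A"
  shows "total_cost E N w q alpha sigma xi p
           \<le> real N powr (A - 1) * (\<Sum>i<N. \<Sum>e\<in>p i. cost_fn q alpha sigma xi e (real (w i e)))"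
proof -
  have "total_cost E N w q alpha sigma xi p
          = (\<Sum>e\<in>E. cost_fn q alpha sigma xi e (\<Sum>i\<in>{i. i < N \<and> e \<in> p i}. real (w i e)))"
    by (simp add: total_cost_def load_def)
  also have "\<dots> \<le> (\<Sum>e\<in>E. real N powr (A - 1) *
                   (\<Sum>i\<in>{i. i < N \<and> e \<in> p i}. cost_fn q alpha sigma xi e (real (w i e))))"
  proof (rule sum_mono)
    fix e assume "e \<in> E"
    have "real (w i e) > 0" if "i < N" for i using w[OF that \<open>e \<in> E\<close>] by simp
    thus "cost_fn q alpha sigma xi e (\<Sum>i\<in>{i. i < N \<and> e \<in> p i}. real (w i e))
          \<le> real N powr (A - 1) * (\<Sum>i\<in>{i. i < N \<and> e \<in> p i}. cost_fn q alpha sigma xi e (real (w i e)))"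
      using assms \<open>e \<in> E\<close> by (intro cost_fn_sum_le card_users_le) auto
  qed
  also have "\<dots> = real N powr (A - 1) * (\<Sum>i<N. \<Sum>e\<in>p i. cost_fn q alpha sigma xi e (real (w i e)))"
    using assms(1,2) by (simp add: sum_distrib_left[symmetric] sum_users_eq_sum_replies)
  finally show ?thesis .
qed

lemma isolated_costs_le_total_cost:
  assumes "finite E" "\<And>i. i < N \<Longrightarrow> p i \<subseteq> E"
    and w: "\<And>i e. i < N \<Longrightarrow> e \<in> E \<Longrightarrow> w i e \<ge> 1"
    and "\<And>e. e \<in> E \<Longrightarrow> sigma e \<ge> 0" "\<And>e j. e \<in> E \<Longrightarrow> j < q \<Longrightarrow> xi e j \<ge> 0"
    and "\<And>j. j < q \<Longrightarrow> 1 \<le> alpha j"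
  shows "(\<Sum>i<N. \<Sum>e\<in>p i. cost_fn q alpha sigma xi e (real (w i e)))
           \<le> real N * total_cost E N w q alpha sigma xi p"
proof -
  have "(\<Sum>i<N. \<Sum>e\<in>p i. cost_fn q alpha sigma xi e (real (w i e)))
          = (\<Sum>e\<in>E. \<Sum>i\<in>{i. i < N \<and> e \<in> p i}. cost_fn q alpha sigma xi e (real (w i e)))"
    using assms(1,2) by (simp add: sum_users_eq_sum_replies)
  also have "\<dots> \<le> (\<Sum>e\<in>E. real N *
                   cost_fn q alpha sigma xi e (\<Sum>i\<in>{i. i < N \<and> e \<in> p i}. real (w i e)))"
  proof (rule sum_mono)
    fix e assume "e \<in> E"
    have "real (w i e) > 0" if "i < N" for i using w[OF that \<open>e \<in> E\<close>] by simp
    thus "(\<Sum>i\<in>{i. i < N \<and> e \<in> p i}. cost_fn q alpha sigma xi e (real (w i e)))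
          \<le> real N * cost_fn q alpha sigma xi e (\<Sum>i\<in>{i. i < N \<and> e \<in> p i}. real (w i e))"
      using assms \<open>e \<in> E\<close> by (intro sum_cost_fn_le card_users_le) auto
  qed
  also have "\<dots> = real N * total_cost E N w q alpha sigma xi p"
    by (simp add: total_cost_def load_def sum_distrib_left)
  finally show ?thesis .
qed

lemma total_cost_restrict:
  "total_cost E N w q alpha sigma xi (restrict p {..<N}) = total_cost E N w q alpha sigma xi p"
proof -
  have "{i. i < N \<and> e \<in> restrict p {..<N} i} = {i. i < N \<and> e \<in> p i}" for e by auto
  thus ?thesis unfolding total_cost_def load_def by (simp only:)
qed

lemma opt_cost_attained:
  assumes "finite E" "\<And>i. i < N \<Longrightarrow> P i \<subseteq> Pow E" "\<And>i. i < N \<Longrightarrow> P i \<noteq> {}"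
  obtains ps where "feasible N P ps"
    "opt_cost E N P w q alpha sigma xi = total_cost E N w q alpha sigma xi ps"
proof -
  let ?C = "total_cost E N w q alpha sigma xi"
  have "{?C p | p. feasible N P p} = ?C ` PiE {..<N} P"
  proof (intro equalityI subsetI)
    fix c assume "c \<in> {?C p | p. feasible N P p}"
    then obtain p where "feasible N P p" "c = ?C p" by blast
    hence "restrict p {..<N} \<in> PiE {..<N} P" "c = ?C (restrict p {..<N})"
      by (auto simp: feasible_def total_cost_restrict)
    thus "c \<in> ?C ` PiE {..<N} P" by blast
  next
    fix c assume "c \<in> ?C ` PiE {..<N} P"
    thus "c \<in> {?C p | p. feasible N P p}" by (auto simp: feasible_def)
  qed
  moreover have "finite (PiE {..<N} P)"
    using assms(1,2) by (intro finite_PiE) (auto intro: finite_subset)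
  moreover have "PiE {..<N} P \<noteq> {}" using assms(3) by (simp add: PiE_eq_empty_iff)
  ultimately have "opt_cost E N P w q alpha sigma xi \<in> ?C ` PiE {..<N} P"
    unfolding opt_cost_def by (metis Min_in finite_imageI image_is_empty)
  thus thesis using that by (auto simp: feasible_def)
qed

lemma reply_oracle_solution:
  assumes "reply_oracle E rho orc"
    and "\<And>i. i < N \<Longrightarrow> P i \<subseteq> Pow E" "\<And>i. i < N \<Longrightarrow> P i \<noteq> {}"
    and "\<And>i e. i < N \<Longrightarrow> e \<in> E \<Longrightarrow> tau i e > 0"
    and "\<And>i. i < N \<Longrightarrow> p0 i = orc (P i) (tau i)" and "feasible N P p"
  shows "feasible N P p0"
    and "(\<Sum>i<N. \<Sum>e\<in>p0 i. tau i e) \<le> rho * (\<Sum>i<N. \<Sum>e\<in>p i. tau i e)"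
proof -
  have reply: "p0 i \<in> P i \<and> (\<Sum>e\<in>p0 i. tau i e) \<le> rho * (\<Sum>e\<in>p i. tau i e)" if "i < N" for i
    using assms that unfolding reply_oracle_def feasible_def by auto
  thus "feasible N P p0" by (simp add: feasible_def)
  show "(\<Sum>i<N. \<Sum>e\<in>p0 i. tau i e) \<le> rho * (\<Sum>i<N. \<Sum>e\<in>p i. tau i e)"
    using reply by (auto simp: sum_distrib_left intro: sum_mono)
qed

theorem lemma5p2:
  fixes E :: "'e set" and N :: nat and P :: "nat \<Rightarrow> 'e set set"
    and w :: "nat \<Rightarrow> 'e \<Rightarrow> nat" and q :: nat and alpha :: "nat \<Rightarrow> real"
    and sigma :: "'e \<Rightarrow> real" and xi :: "'e \<Rightarrow> nat \<Rightarrow> real"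
    and rho :: real and orc :: "'e set set \<Rightarrow> ('e \<Rightarrow> real) \<Rightarrow> 'e set"
    and p0 :: "nat \<Rightarrow> 'e set"
  assumes "finite E"
    and "\<And>i. i < N \<Longrightarrow> P i \<subseteq> Pow E"
    and "\<And>i. i < N \<Longrightarrow> P i \<noteq> {}"
    and "\<And>i e. i < N \<Longrightarrow> e \<in> E \<Longrightarrow> w i e \<ge> 1"
    and "q \<ge> 1"
    and "\<And>j. j < q \<Longrightarrow> alpha j > 1"
    and "\<And>e. e \<in> E \<Longrightarrow> sigma e \<ge> 0"
    and "\<And>e j. e \<in> E \<Longrightarrow> j < q \<Longrightarrow> xi e j \<ge> 0"
    and "\<And>e. e \<in> E \<Longrightarrow> \<exists>j<q. xi e j > 0"
    and "rho \<ge> 1"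
    and "reply_oracle E rho orc"
    and "\<And>i. i < N \<Longrightarrow> p0 i = orc (P i) (\<lambda>e. cost_fn q alpha sigma xi e (real (w i e)))"
  shows "total_cost E N w q alpha sigma xi p0
           \<le> rho * (real N powr (Max (alpha ` {..<q}))) * opt_cost E N P w q alpha sigma xi"
proof -
  define A where "A = Max (alpha ` {..<q})"
  define tau where "tau i e = cost_fn q alpha sigma xi e (real (w i e))" for i e
  have alpha: "1 \<le> alpha j" "alpha j \<le> A" if "j < q" for j
    using assms(6)[OF that] that by (auto simp: A_def)
  have "1 \<le> A" using alpha[of 0] assms(5) by simp
  have tau_pos: "tau i e > 0" if "i < N" "e \<in> E" for i e
    unfolding tau_def using assms(4)[OF that] assms(7-9) that(2) by (intro cost_fn_pos) auto
  obtain ps where ps: "feasible N P ps"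
    "opt_cost E N P w q alpha sigma xi = total_cost E N w q alpha sigma xi ps"
    using opt_cost_attained assms(1-3) by metis
  have "p0 i = orc (P i) (tau i)" if "i < N" for i
    using assms(12)[OF that] by (simp add: tau_def[abs_def])
  note p0 = reply_oracle_solution[OF assms(11,2,3) tau_pos this ps(1)]
  have replies: "p0 i \<subseteq> E" "ps i \<subseteq> E" if "i < N" for i
    using p0(1) ps(1) assms(2) that unfolding feasible_def by blast+
  have "total_cost E N w q alpha sigma xi p0 \<le> real N powr (A - 1) * (\<Sum>i<N. \<Sum>e\<in>p0 i. tau i e)"
    unfolding tau_def using assms replies alpha \<open>1 \<le> A\<close>
    by (intro total_cost_le_isolated_costs) auto
  also have "\<dots> \<le> real N powr (A - 1) * (rho * (\<Sum>i<N. \<Sum>e\<in>ps i. tau i e))"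
    using p0(2) by (intro mult_left_mono) simp_all
  also have "\<dots> \<le> real N powr (A - 1) * (rho * (real N * total_cost E N w q alpha sigma xi ps))"
    unfolding tau_def using assms replies alpha
    by (intro mult_left_mono isolated_costs_le_total_cost) auto
  also have "\<dots> = rho * (real N powr (A - 1) * real N) * opt_cost E N P w q alpha sigma xi"
    using ps(2) by (simp add: mult_ac)
  also have "real N powr (A - 1) * real N = real N powr A"
    by (cases "N = 0") (simp_all add: powr_diff)
  finally show ?thesis unfolding A_def .
qed

end
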